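(* Let $k \geq \ell \geq 2$, $k \geq 3$, $n > k+\ell$. Suppose $\mathcal F \subset \binom{[n]}{k}$ and $\mathcal G \subset \binom{[2\ell]}{\ell}$ are non-trivial and cross-intersecting. Then $$|\mathcal F| + |\mathcal G| \leq h(n,k,\ell) := \binom{n}{k} - 2\binom{n-\ell}{k} + \binom{n-2\ell}{k} + 2,$$ and the inequality is strict unless $|\mathcal G| = 2$.
   Context: Families are cross-intersecting if every member of one meets every member of the other; a non-empty family is non-trivial if the intersection of all its members is empty. $\binom{[2\ell]}{\ell}$ is the set of $\ell$-subsets of $\{1,\dots,2\ell\}$. *)

theory Defs
  imports Main
begin

definition cross_intersecting :: "'a set set \<Rightarrow> 'a set set \<Rightarrow> bool" where
  "cross_intersecting F G \<longleftrightarrow> (\<forall>A\<in>F. \<forall>B\<in>G. A \<inter> B \<noteq> {})"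

definition non_trivial :: "'a set set \<Rightarrow> bool" where
  "non_trivial F \<longleftrightarrow> F \<noteq> {} \<and> \<Inter> F = {}"

definition h :: "nat \<Rightarrow> nat \<Rightarrow> nat \<Rightarrow> int" where
  "h n k l = int (n choose k) - 2 * int ((n - l) choose k) + int ((n - 2*l) choose k) + 2"

end

theory Submission
  imports Defs
begin

text \<open>Fix \<open>B1 \<in> G\<close> and let \<open>X = {1..2l}\<close>. A \<open>k\<close>-set disjoint from some member of \<open>G\<close>
  cannot belong to \<open>F\<close>, so it suffices to find \<open>2 C(n-l,k) - C(n-2l,k) + |G| - 2\<close> such
  blocked \<open>k\<close>-sets, and one more when \<open>|G| \<ge> 3\<close>. The \<open>k\<close>-sets missing \<open>B1\<close> are blocked.
  A \<open>k\<close>-set whose trace \<open>T\<close> on \<open>X\<close> is a nonempty subset of \<open>B1\<close> is made blocked by moving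
  the part of \<open>T\<close> inside a member that avoids \<open>min T\<close> to \<open>X - B1\<close>; as \<open>min T\<close> stays put, this
  is injective and the image still meets \<open>B1\<close>. Every further member \<open>B\<close> blocks the
  \<open>C(n-2l,k-l)\<close> \<open>k\<close>-sets with trace \<open>X - B\<close>, which are at least two when \<open>k > l\<close>. When
  \<open>k = l\<close>, the last set comes from a trace of size \<open>l - 1\<close>: at least \<open>2l - 2 > l\<close> such traces
  meet \<open>B1\<close> and miss a member, while at most \<open>l\<close> of them are traces of shifted sets.\<close>

lemma binomial_ge_2:
  assumes "0 < j" "j < r"
  shows "2 \<le> r choose j"
proof -
  obtain r' j' where r: "r = Suc r'" and j: "j = Suc j'"
    using assms by (metis Suc_pred less_nat_zero_code not_gr_zero)
  have "1 \<le> r' choose j'" "1 \<le> r' choose j"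
    using assms r j by (simp_all add: Suc_leI)
  then show ?thesis
    using r j by simp
qed

definition deletions :: "'a set \<Rightarrow> 'a set \<Rightarrow> 'a set set" where
  "deletions B C = (\<lambda>c. C - {c}) ` {c \<in> C. (C - {c}) \<inter> B \<noteq> {}}"

lemma deletions_meet: "S \<in> deletions B C \<Longrightarrow> S \<inter> B \<noteq> {}"
  by (auto simp: deletions_def)

lemma card_deletions:
  assumes C: "finite C" "C \<inter> B \<noteq> {}"
  shows "card C - 1 \<le> card (deletions B C)"
    and "2 \<le> card (C \<inter> B) \<Longrightarrow> card (deletions B C) = card C"
proof -
  define good where "good = {c \<in> C. (C - {c}) \<inter> B \<noteq> {}}"
  have "inj_on (\<lambda>c. C - {c}) good"
    by (rule inj_onI) (auto simp: good_def)
  then have card_good: "card (deletions B C) = card good"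
    by (simp add: deletions_def good_def[symmetric] card_image)
  obtain a where a: "a \<in> C \<inter> B"
    using C by auto
  have "C - {a} \<subseteq> good"
    using a by (auto simp: good_def)
  moreover have "finite good"
    using C by (simp add: good_def)
  ultimately have "card (C - {a}) \<le> card good"
    by (rule card_mono[rotated])
  then show "card C - 1 \<le> card (deletions B C)"
    using a C(1) card_good by simp
  assume two: "2 \<le> card (C \<inter> B)"
  have "(C - {c}) \<inter> B \<noteq> {}" for c
  proof
    assume "(C - {c}) \<inter> B = {}"
    then have "C \<inter> B \<subseteq> {c}"
      by auto
    then show False
      using two card_mono[of "{c}" "C \<inter> B"] by simp
  qed
  then have "good = C"
    by (auto simp: good_def)
  then show "card (deletions B C) = card C"
    using card_good by simp
qed

lemma deletions_Int_subset:
  assumes "C \<noteq> C'"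
  shows "deletions B C \<inter> deletions B C' \<subseteq> {C \<inter> C'}"
proof
  fix S
  assume "S \<in> deletions B C \<inter> deletions B C'"
  then obtain c c' where c: "c \<in> C" "S = C - {c}" and c': "c' \<in> C'" "S = C' - {c'}"
    by (auto simp: deletions_def)
  have "c \<noteq> c'"
    using assms c c' by (metis insert_Diff)
  then have "c \<notin> C'"
    using c c' by blast
  then show "S \<in> {C \<inter> C'}"
    using c c' by blast
qed

lemma deletions_disjoint:
  assumes "C \<noteq> C'" "C \<inter> C' \<inter> B = {}"
  shows "deletions B C \<inter> deletions B C' = {}"
proof -
  have "S \<notin> deletions B C \<inter> deletions B C'" for S
  proof
    assume S: "S \<in> deletions B C \<inter> deletions B C'"
    then have "S = C \<inter> C'"
      using deletions_Int_subset[OF assms(1)] by blast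
    moreover have "S \<inter> B \<noteq> {}"
      using S deletions_meet by blast
    ultimately show False
      using assms(2) by simp
  qed
  then show ?thesis
    by blast
qed

lemma card_deletions_Un:
  assumes fin: "finite C" "finite C'" and "card C = card C'" "C \<noteq> C'"
    and meet: "C \<inter> B \<noteq> {}" "C' \<inter> B \<noteq> {}"
    and spread: "2 \<le> card (C \<inter> B) \<or> 2 \<le> card (C' \<inter> B) \<or> C \<inter> C' \<inter> B = {}"
  shows "2 * card C - 2 \<le> card (deletions B C \<union> deletions B C')"
proof -
  let ?D = "deletions B C" and ?D' = "deletions B C'"
  have fin_D: "finite ?D" "finite ?D'"
    using fin by (simp_all add: deletions_def)
  have "card (?D \<union> ?D') + card (?D \<inter> ?D') = card ?D + card ?D'"
    using card_Un_Int[OF fin_D] by linarith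
  moreover have "card (?D \<inter> ?D') \<le> 1"
    using deletions_Int_subset[OF \<open>C \<noteq> C'\<close>] card_mono[of "{C \<inter> C'}"] by simp
  moreover have "card C - 1 \<le> card ?D" "card C' - 1 \<le> card ?D'"
    using card_deletions(1) fin meet by auto
  moreover have "card C \<le> card ?D \<or> card C' \<le> card ?D' \<or> ?D \<inter> ?D' = {}"
    using spread
  proof (elim disjE)
    assume "2 \<le> card (C \<inter> B)"
    then show ?thesis
      using card_deletions(2)[OF fin(1) meet(1)] by simp
  next
    assume "2 \<le> card (C' \<inter> B)"
    then show ?thesis
      using card_deletions(2)[OF fin(2) meet(2)] by simp
  next
    assume "C \<inter> C' \<inter> B = {}"
    then show ?thesis
      using deletions_disjoint[OF \<open>C \<noteq> C'\<close>] by simp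
  qed
  ultimately show ?thesis
    using \<open>card C = card C'\<close> by auto
qed

locale nontrivial_half_family =
  fixes n k l :: nat and G :: "nat set set" and B1 :: "nat set"
  assumes l_le_k: "l \<le> k" and two_le_l: "2 \<le> l" and three_le_k: "3 \<le> k"
    and k_l_less_n: "k + l < n"
    and G_subsets: "G \<subseteq> {B. B \<subseteq> {1..2*l} \<and> card B = l}"
    and G_nontrivial: "non_trivial G"
    and B1_in_G: "B1 \<in> G"
begin

definition "X = {1..2*l}"
definition "U = {1..n}"

lemma finite_X: "finite X" and card_X: "card X = 2*l"
  and finite_U: "finite U" and card_U: "card U = n"
  and X_subset_U: "X \<subseteq> U" and card_U_Diff_X: "card (U - X) = n - 2*l"
proof -
  show "finite X" "card X = 2*l" "finite U" "card U = n"
    by (simp_all add: X_def U_def)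
  show XU: "X \<subseteq> U"
    using k_l_less_n l_le_k by (auto simp: X_def U_def)
  show "card (U - X) = n - 2*l"
    using XU by (simp add: card_Diff_subset X_def U_def)
qed

lemma member_G: "B \<in> G \<Longrightarrow> B \<subseteq> X \<and> card B = l"
  using G_subsets by (auto simp: X_def)

lemma finite_member: "B \<in> G \<Longrightarrow> finite B"
  using member_G finite_X finite_subset by blast

lemma card_X_Diff_member: "B \<in> G \<Longrightarrow> card (X - B) = l"
  using member_G finite_member card_X by (simp add: card_Diff_subset)

lemma finite_G: "finite G"
  using member_G finite_X by (intro finite_subset[of G "Pow X"]) auto

lemma B1_nonempty: "B1 \<noteq> {}"
  using member_G[OF B1_in_G] two_le_l by auto

definition "avoider e = (SOME B. B \<in> G \<and> e \<notin> B)"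

lemma avoider_in_G: "avoider e \<in> G" and avoider_avoids: "e \<notin> avoider e"
proof -
  have "\<exists>B. B \<in> G \<and> e \<notin> B"
    using G_nontrivial by (auto simp: non_trivial_def)
  then show "avoider e \<in> G" "e \<notin> avoider e"
    unfolding avoider_def by (metis (mono_tags, lifting) someI_ex)+
qed

lemma card_B1_Int_eq:
  assumes B: "B \<in> G"
  shows "card (B1 \<inter> B) = card (X - B1 - B)"
proof -
  have fin: "finite B1" "finite B"
    using finite_member B1_in_G B by auto
  have "card (B1 \<union> B) + card (B1 \<inter> B) = l + l"
    using card_Un_Int[OF fin] member_G[OF B1_in_G] member_G[OF B] by simp
  moreover have "X - B1 - B = X - (B1 \<union> B)"
    by auto
  then have "card (X - B1 - B) = 2*l - card (B1 \<union> B)"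
    using member_G[OF B1_in_G] member_G[OF B] fin card_X by (simp add: card_Diff_subset)
  ultimately show ?thesis
    by linarith
qed

definition "exchange e = (SOME f. bij_betw f (B1 \<inter> avoider e) (X - B1 - avoider e))"

lemma bij_exchange: "bij_betw (exchange e) (B1 \<inter> avoider e) (X - B1 - avoider e)"
proof -
  have "\<exists>f. bij_betw f (B1 \<inter> avoider e) (X - B1 - avoider e)"
    using finite_member[OF B1_in_G] finite_X
    by (intro finite_same_card_bij card_B1_Int_eq avoider_in_G) auto
  then show ?thesis
    unfolding exchange_def by (metis (mono_tags, lifting) someI_ex)
qed

lemma finite_subset_B1: "T \<subseteq> B1 \<Longrightarrow> finite T"
  using finite_member[OF B1_in_G] finite_subset by blast

definition "shift_trace T = (T - avoider (Min T)) \<union> exchange (Min T) ` (T \<inter> avoider (Min T))"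

context
  fixes T assumes T: "T \<subseteq> B1" "T \<noteq> {}"
begin

lemma exchange_image_subset: "exchange (Min T) ` (T \<inter> avoider (Min T)) \<subseteq> X - B1 - avoider (Min T)"
  using bij_exchange T(1) unfolding bij_betw_def by blast

lemma shift_trace_subset: "shift_trace T \<subseteq> X - avoider (Min T)"
  using exchange_image_subset T member_G[OF B1_in_G] by (auto simp: shift_trace_def)

lemma shift_trace_Int_B1: "shift_trace T \<inter> B1 = T - avoider (Min T)"
  using exchange_image_subset T by (auto simp: shift_trace_def)

lemma shift_trace_Diff_B1: "shift_trace T - B1 = exchange (Min T) ` (T \<inter> avoider (Min T))"
  using exchange_image_subset T by (auto simp: shift_trace_def)

lemma card_shift_trace: "card (shift_trace T) = card T"
proof -
  let ?B = "avoider (Min T)"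
  have fin: "finite T"
    using finite_subset_B1[OF T(1)] .
  have "inj_on (exchange (Min T)) (T \<inter> ?B)"
    using bij_exchange T(1) unfolding bij_betw_def by (meson inf_mono inj_on_subset order_refl)
  then have "card (shift_trace T) = card (T - ?B) + card (T \<inter> ?B)"
    unfolding shift_trace_def using exchange_image_subset fin T(1)
    by (subst card_Un_disjoint) (auto simp: card_image)
  also have "\<dots> = card T"
    using fin by (metis add.commute card_Int_Diff)
  finally show ?thesis .
qed

lemma Min_in_shift_trace: "Min T \<in> shift_trace T \<inter> B1"
  using finite_subset_B1[OF T(1)] shift_trace_Int_B1 avoider_avoids T by auto

lemma Min_shift_trace_Int_B1: "Min (shift_trace T \<inter> B1) = Min T"
proof (rule Min_eqI)
  show "finite (shift_trace T \<inter> B1)"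
    using finite_member[OF B1_in_G] by simp
  show "Min T \<in> shift_trace T \<inter> B1"
    by (fact Min_in_shift_trace)
  show "Min T \<le> y" if "y \<in> shift_trace T \<inter> B1" for y
    using that finite_subset_B1[OF T(1)] shift_trace_Int_B1 by auto
qed

end

lemma inj_on_shift_trace: "inj_on shift_trace {T. T \<subseteq> B1 \<and> T \<noteq> {}}"
proof (rule inj_onI)
  fix T T'
  assume "T \<in> {T. T \<subseteq> B1 \<and> T \<noteq> {}}" "T' \<in> {T. T \<subseteq> B1 \<and> T \<noteq> {}}"
    and eq: "shift_trace T = shift_trace T'"
  then have T: "T \<subseteq> B1" "T \<noteq> {}" and T': "T' \<subseteq> B1" "T' \<noteq> {}"
    by auto
  have "Min T = Min (shift_trace T \<inter> B1)"
    using Min_shift_trace_Int_B1[OF T] by simp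
  also have "\<dots> = Min T'"
    using Min_shift_trace_Int_B1[OF T'] eq by simp
  finally have e: "Min T = Min T'" .
  let ?B = "avoider (Min T)"
  have outside: "T - ?B = T' - ?B"
    using shift_trace_Int_B1[OF T] shift_trace_Int_B1[OF T'] eq e by simp
  have "exchange (Min T) ` (T \<inter> ?B) = exchange (Min T) ` (T' \<inter> ?B)"
    using shift_trace_Diff_B1[OF T] shift_trace_Diff_B1[OF T'] eq e by simp
  moreover have "inj_on (exchange (Min T)) (B1 \<inter> ?B)"
    using bij_exchange bij_betw_def by blast
  moreover have "T \<inter> ?B \<subseteq> B1 \<inter> ?B" "T' \<inter> ?B \<subseteq> B1 \<inter> ?B"
    using T(1) T'(1) by auto
  ultimately have "T \<inter> ?B = T' \<inter> ?B"
    by (simp add: inj_on_image_eq_iff)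
  then show "T = T'"
    using outside by blast
qed

lemma shift_trace_B1: "shift_trace B1 = X - avoider (Min B1)"
proof (rule card_subset_eq)
  show "finite (X - avoider (Min B1))"
    using finite_X by simp
  show "shift_trace B1 \<subseteq> X - avoider (Min B1)"
    using shift_trace_subset[OF order_refl B1_nonempty] .
  show "card (shift_trace B1) = card (X - avoider (Min B1))"
    using card_shift_trace[OF order_refl B1_nonempty] card_X_Diff_member[OF avoider_in_G]
      member_G[OF B1_in_G] by simp
qed

definition "ksets = {A. A \<subseteq> U \<and> card A = k}"
definition "ksets_avoiding S = {A \<in> ksets. A \<inter> S = {}}"
definition "blocked = {A \<in> ksets. \<exists>B\<in>G. A \<inter> B = {}}"
definition "trace_in_B1 = {A \<in> ksets. A \<inter> (X - B1) = {} \<and> A \<inter> B1 \<noteq> {}}"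

lemma finite_ksets: "finite ksets"
  using finite_U by (intro finite_subset[of ksets "Pow U"]) (auto simp: ksets_def)

lemma card_ksets: "card ksets = n choose k"
  using n_subsets[OF finite_U] card_U by (simp add: ksets_def)

lemma card_ksets_avoiding:
  assumes "S \<subseteq> U"
  shows "card (ksets_avoiding S) = (n - card S) choose k"
proof -
  have "ksets_avoiding S = {A. A \<subseteq> U - S \<and> card A = k}"
    by (auto simp: ksets_avoiding_def ksets_def)
  moreover have "card (U - S) = n - card S"
    using assms finite_U card_U by (simp add: card_Diff_subset finite_subset)
  ultimately show ?thesis
    using n_subsets[of "U - S" k] finite_U by simp
qed

lemma card_ksets_avoiding_B1: "card (ksets_avoiding B1) = (n - l) choose k"
  using card_ksets_avoiding[of B1] member_G[OF B1_in_G] X_subset_U by auto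

lemma card_trace_in_B1: "card trace_in_B1 = ((n - l) choose k) - ((n - 2*l) choose k)"
proof -
  have "trace_in_B1 = ksets_avoiding (X - B1) - ksets_avoiding X"
    using member_G[OF B1_in_G] by (auto simp: trace_in_B1_def ksets_avoiding_def)
  moreover have "ksets_avoiding X \<subseteq> ksets_avoiding (X - B1)"
    by (auto simp: ksets_avoiding_def)
  moreover have "finite (ksets_avoiding X)"
    using finite_ksets by (simp add: ksets_avoiding_def)
  moreover have "card (ksets_avoiding (X - B1)) = (n - l) choose k"
    using card_ksets_avoiding[of "X - B1"] card_X_Diff_member[OF B1_in_G] X_subset_U by auto
  moreover have "card (ksets_avoiding X) = (n - 2*l) choose k"
    using card_ksets_avoiding[OF X_subset_U] card_X by simp
  ultimately show ?thesis
    by (simp add: card_Diff_subset)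
qed

definition "shift A = (A - X) \<union> shift_trace (A \<inter> X)"

context
  fixes A assumes A: "A \<in> trace_in_B1"
begin

lemma trace_subset_B1: "A \<inter> X \<subseteq> B1" and trace_nonempty: "A \<inter> X \<noteq> {}"
  using A member_G[OF B1_in_G] by (auto simp: trace_in_B1_def)

lemma trace_shift: "shift A \<inter> X = shift_trace (A \<inter> X)"
  and shift_Diff_X: "shift A - X = A - X"
  using shift_trace_subset[OF trace_subset_B1 trace_nonempty] by (auto simp: shift_def)

lemma card_trace_shift: "card (shift A \<inter> X) = card (A \<inter> X)"
  using trace_shift card_shift_trace[OF trace_subset_B1 trace_nonempty] by simp

lemma shift_in_ksets: "shift A \<in> ksets"
proof -
  have AK: "A \<subseteq> U" "card A = k"
    using A by (auto simp: trace_in_B1_def ksets_def)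
  have fin: "finite A"
    using AK finite_U finite_subset by blast
  have sub: "shift_trace (A \<inter> X) \<subseteq> X"
    using shift_trace_subset[OF trace_subset_B1 trace_nonempty] by blast
  have "card (shift A) = card (A - X) + card (shift_trace (A \<inter> X))"
    unfolding shift_def using fin finite_subset[OF sub finite_X] sub
    by (intro card_Un_disjoint) auto
  also have "\<dots> = card A"
    using card_shift_trace[OF trace_subset_B1 trace_nonempty] card_Int_Diff[OF fin, of X] by simp
  finally have "card (shift A) = k"
    using AK by simp
  moreover have "shift A \<subseteq> U"
    using AK X_subset_U shift_trace_subset[OF trace_subset_B1 trace_nonempty]
    by (auto simp: shift_def)
  ultimately show ?thesis
    by (simp add: ksets_def)
qed

lemma shift_in_blocked: "shift A \<in> blocked"
proof -
  let ?B = "avoider (Min (A \<inter> X))"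
  have "shift A \<inter> ?B = {}"
    using shift_trace_subset[OF trace_subset_B1 trace_nonempty] member_G[OF avoider_in_G]
    by (auto simp: shift_def)
  then show ?thesis
    using shift_in_ksets avoider_in_G by (auto simp: blocked_def)
qed

lemma shift_meets_B1: "shift A \<inter> B1 \<noteq> {}"
  using Min_in_shift_trace[OF trace_subset_B1 trace_nonempty] trace_shift by auto

end

lemma inj_on_shift: "inj_on shift trace_in_B1"
proof (rule inj_onI)
  fix A A'
  assume A: "A \<in> trace_in_B1" and A': "A' \<in> trace_in_B1" and eq: "shift A = shift A'"
  have "shift_trace (A \<inter> X) = shift_trace (A' \<inter> X)"
    using trace_shift[OF A] trace_shift[OF A'] eq by simp
  then have "A \<inter> X = A' \<inter> X"
    by (rule inj_onD[OF inj_on_shift_trace]) (simp_all add: trace_subset_B1 trace_nonempty A A')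
  moreover have "A - X = A' - X"
    using shift_Diff_X[OF A] shift_Diff_X[OF A'] eq by simp
  ultimately show "A = A'"
    by blast
qed

lemma trace_of_shifted:
  assumes "A \<in> shift ` trace_in_B1"
  shows "A \<inter> X \<in> shift_trace ` {T. T \<subseteq> B1 \<and> card T = card (A \<inter> X)}"
proof -
  obtain A' where A': "A' \<in> trace_in_B1" "A = shift A'"
    using assms by auto
  then have "A \<inter> X = shift_trace (A' \<inter> X)" "card (A' \<inter> X) = card (A \<inter> X)"
    using trace_shift card_trace_shift by simp_all
  then show ?thesis
    using trace_subset_B1[OF A'(1)] by blast
qed

definition "with_trace S = {A \<in> ksets. A \<inter> X = S}"

lemma card_with_trace:
  assumes S: "S \<subseteq> X" "card S \<le> k"
  shows "(n - 2*l) choose (k - card S) \<le> card (with_trace S)"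
proof -
  define Ws where "Ws = {W. W \<subseteq> U - X \<and> card W = k - card S}"
  have card_Ws: "card Ws = (n - 2*l) choose (k - card S)"
    using n_subsets[of "U - X"] finite_U card_U_Diff_X by (simp add: Ws_def)
  have image_subset: "(\<lambda>W. S \<union> W) ` Ws \<subseteq> with_trace S"
  proof
    fix A
    assume "A \<in> (\<lambda>W. S \<union> W) ` Ws"
    then obtain W where W: "W \<subseteq> U - X" "card W = k - card S" and A: "A = S \<union> W"
      by (auto simp: Ws_def)
    have "finite S" "finite W"
      using finite_subset[OF S(1) finite_X] finite_subset[OF W(1)] finite_U by auto
    then have "card A = k"
      using A W S card_Un_disjoint[of S W] by auto
    moreover have "A \<subseteq> U" "A \<inter> X = S"
      using A W S X_subset_U by auto
    ultimately show "A \<in> with_trace S"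
      by (simp add: with_trace_def ksets_def)
  qed
  have inj: "inj_on (\<lambda>W. S \<union> W) Ws"
  proof (rule inj_onI)
    fix W W'
    assume "W \<in> Ws" "W' \<in> Ws" "S \<union> W = S \<union> W'"
    moreover have "W \<inter> S = {}" "W' \<inter> S = {}"
      using S(1) \<open>W \<in> Ws\<close> \<open>W' \<in> Ws\<close> by (auto simp: Ws_def)
    ultimately show "W = W'"
      by blast
  qed
  have "finite (with_trace S)"
    using finite_ksets by (simp add: with_trace_def)
  then show ?thesis
    using card_mono[OF _ image_subset] card_image[OF inj] card_Ws by simp
qed

lemma avoider_Min_B1_ne_B1: "avoider (Min B1) \<noteq> B1"
  using avoider_avoids Min_in[OF finite_member[OF B1_in_G] B1_nonempty] by metis

lemma two_le_card_G: "2 \<le> card G"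
proof -
  have "{B1, avoider (Min B1)} \<subseteq> G"
    using B1_in_G avoider_in_G by simp
  then have "card {B1, avoider (Min B1)} \<le> card G"
    by (rule card_mono[OF finite_G])
  then show ?thesis
    using avoider_Min_B1_ne_B1 by simp
qed

definition "other_members = G - {B1, avoider (Min B1)}"

lemma card_other_members: "card other_members = card G - 2"
  using avoider_Min_B1_ne_B1 B1_in_G avoider_in_G finite_G
  by (simp add: other_members_def card_Diff_subset)

lemma complement_meets_B1:
  assumes "B \<in> G" "B \<noteq> B1"
  shows "(X - B) \<inter> B1 \<noteq> {}"
proof -
  have "\<not> B1 \<subseteq> B"
    using card_subset_eq[OF finite_member[OF assms(1)], of B1] assms(2)
      member_G[OF B1_in_G] member_G[OF assms(1)] by auto
  then show ?thesis
    using member_G[OF B1_in_G] by auto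
qed

text \<open>\<open>B1\<close> and \<open>avoider (Min B1)\<close> are left out: \<open>k\<close>-sets with trace \<open>X - B1\<close> miss \<open>B1\<close>, and
  those with trace \<open>X - avoider (Min B1)\<close> may be shifts (see \<open>shift_trace_B1\<close>).\<close>

definition "extra = (\<Union>B\<in>other_members. with_trace (X - B))"

lemma card_extra: "(card G - 2) * ((n - 2*l) choose (k - l)) \<le> card extra"
proof -
  have fin: "finite other_members"
    using finite_G by (simp add: other_members_def)
  have "card extra = (\<Sum>B\<in>other_members. card (with_trace (X - B)))"
    unfolding extra_def
  proof (rule card_UN_disjoint[OF fin])
    show "\<forall>B\<in>other_members. finite (with_trace (X - B))"
      using finite_ksets by (simp add: with_trace_def)
    show "\<forall>B\<in>other_members. \<forall>B'\<in>other_members. B \<noteq> B' \<longrightarrow>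
        with_trace (X - B) \<inter> with_trace (X - B') = {}"
    proof (intro ballI impI)
      fix B B'
      assume "B \<in> other_members" "B' \<in> other_members" "B \<noteq> B'"
      then have "X - B \<noteq> X - B'"
        using member_G by (auto simp: other_members_def)
      then show "with_trace (X - B) \<inter> with_trace (X - B') = {}"
        by (auto simp: with_trace_def)
    qed
  qed
  moreover have "(n - 2*l) choose (k - l) \<le> card (with_trace (X - B))" if "B \<in> other_members" for B
    using card_with_trace[of "X - B"] card_X_Diff_member l_le_k that by (simp add: other_members_def)
  ultimately show ?thesis
    using sum_mono[of other_members "\<lambda>_. (n - 2*l) choose (k - l)"] card_other_members
    by (simp add: mult.commute)
qed

context
  fixes A assumes A: "A \<in> extra"
begin

lemma extra_with_trace:
  obtains B where "B \<in> G" "B \<noteq> B1" "B \<noteq> avoider (Min B1)" "A \<in> ksets" "A \<inter> X = X - B"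
  using A by (auto simp: extra_def other_members_def with_trace_def)

lemma extra_in_blocked: "A \<in> blocked"
proof (rule extra_with_trace)
  fix B
  assume "B \<in> G" "A \<in> ksets" "A \<inter> X = X - B"
  then show "A \<in> blocked"
    using member_G[of B] by (auto simp: blocked_def)
qed

lemma extra_meets_B1: "A \<inter> B1 \<noteq> {}"
  by (rule extra_with_trace) (use complement_meets_B1 in auto)

lemma card_trace_extra: "card (A \<inter> X) = l"
  by (rule extra_with_trace) (simp add: card_X_Diff_member)

lemma extra_not_shifted: "A \<notin> shift ` trace_in_B1"
proof
  assume "A \<in> shift ` trace_in_B1"
  then have "A \<inter> X \<in> shift_trace ` {T. T \<subseteq> B1 \<and> card T = l}"
    using trace_of_shifted[of A] card_trace_extra by simp
  then obtain T where T: "T \<subseteq> B1" "card T = l" "A \<inter> X = shift_trace T"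
    by blast
  then have "T = B1"
    using card_subset_eq[OF finite_member[OF B1_in_G]] member_G[OF B1_in_G] by simp
  then have "A \<inter> X = X - avoider (Min B1)"
    using T(3) shift_trace_B1 by simp
  moreover obtain B where "B \<in> G" "B \<noteq> avoider (Min B1)" "A \<inter> X = X - B"
    by (rule extra_with_trace)
  ultimately show False
    using member_G[OF \<open>B \<in> G\<close>] member_G[OF avoider_in_G] by blast
qed

end

definition "small_blocked_traces = {S. S \<subseteq> X \<and> card S = l - 1 \<and> S \<inter> B1 \<noteq> {} \<and> (\<exists>B\<in>G. S \<inter> B = {})}"

lemma deletions_complement_subset:
  assumes "B \<in> G" "B \<noteq> B1"
  shows "deletions B1 (X - B) \<subseteq> small_blocked_traces"
proof
  fix S
  assume "S \<in> deletions B1 (X - B)"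
  then obtain c where c: "c \<in> X - B" "S = X - B - {c}" "S \<inter> B1 \<noteq> {}"
    by (auto simp: deletions_def)
  then have "card S = l - 1"
    using card_X_Diff_member[OF assms(1)] finite_X by simp
  then show "S \<in> small_blocked_traces"
    using c assms(1) by (auto simp: small_blocked_traces_def)
qed

lemma spread_partner:
  assumes B2: "B2 \<in> G" and a: "(X - B2) \<inter> B1 = {a}"
  obtains B3 where "B3 \<in> G" "B3 \<noteq> B1" "B3 \<noteq> B2"
    "2 \<le> card ((X - B3) \<inter> B1) \<or> (X - B2) \<inter> (X - B3) \<inter> B1 = {}"
proof -
  have "\<not> B1 \<subseteq> {a}"
  proof
    assume "B1 \<subseteq> {a}"
    then have "card B1 \<le> 1"
      using card_mono[of "{a}" B1] by simp
    then show False
      using member_G[OF B1_in_G] two_le_l by simp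
  qed
  then obtain b where b: "b \<in> B1" "b \<noteq> a"
    by blast
  have "b \<in> B2"
    using a b member_G[OF B1_in_G] by auto
  then have B3: "avoider b \<in> G" "avoider b \<noteq> B1" "avoider b \<noteq> B2"
    using b avoider_in_G avoider_avoids by auto
  have "2 \<le> card ((X - avoider b) \<inter> B1) \<or> (X - B2) \<inter> (X - avoider b) \<inter> B1 = {}"
  proof (cases "a \<in> X - avoider b")
    case True
    then have "{a, b} \<subseteq> (X - avoider b) \<inter> B1"
      using a b avoider_avoids member_G[OF B1_in_G] by auto
    then have "card {a, b} \<le> card ((X - avoider b) \<inter> B1)"
      using finite_X by (intro card_mono) auto
    then show ?thesis
      using b by simp
  next
    case False
    then show ?thesis
      using a by auto
  qed
  then show ?thesis
    by (rule that[OF B3])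
qed

lemma spread_pair:
  assumes "3 \<le> card G"
  obtains B2 B3 where "B2 \<in> G" "B2 \<noteq> B1" "B3 \<in> G" "B3 \<noteq> B1" "B2 \<noteq> B3"
    "2 \<le> card ((X - B2) \<inter> B1) \<or> 2 \<le> card ((X - B3) \<inter> B1) \<or> (X - B2) \<inter> (X - B3) \<inter> B1 = {}"
proof -
  define B2 where "B2 = avoider (Min B1)"
  have B2: "B2 \<in> G" "B2 \<noteq> B1"
    using avoider_in_G avoider_Min_B1_ne_B1 by (simp_all add: B2_def)
  show ?thesis
  proof (cases "2 \<le> card ((X - B2) \<inter> B1)")
    case True
    have "card (G - {B1, B2}) \<noteq> 0"
      using assms B1_in_G B2 finite_G by (simp add: card_Diff_subset)
    then have "G - {B1, B2} \<noteq> {}"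
      by force
    then obtain B3 where "B3 \<in> G" "B3 \<noteq> B1" "B3 \<noteq> B2"
      by blast
    then show ?thesis
      by (intro that[OF B2]) (use True in auto)
  next
    case False
    have "card ((X - B2) \<inter> B1) \<noteq> 0"
      using complement_meets_B1[OF B2] finite_member[OF B1_in_G] by simp
    then have "card ((X - B2) \<inter> B1) = 1"
      using False by linarith
    then obtain a where "(X - B2) \<inter> B1 = {a}"
      by (rule card_1_singletonE)
    then obtain B3 where "B3 \<in> G" "B3 \<noteq> B1" "B3 \<noteq> B2"
      "2 \<le> card ((X - B3) \<inter> B1) \<or> (X - B2) \<inter> (X - B3) \<inter> B1 = {}"
      by (rule spread_partner[OF B2(1)])
    then show ?thesis
      by (intro that[OF B2]) auto
  qed
qed

lemma card_small_blocked_traces: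
  assumes "3 \<le> l" "3 \<le> card G"
  shows "l + 1 \<le> card small_blocked_traces"
proof -
  obtain B2 B3 where B: "B2 \<in> G" "B2 \<noteq> B1" "B3 \<in> G" "B3 \<noteq> B1" "B2 \<noteq> B3"
    and spread: "2 \<le> card ((X - B2) \<inter> B1) \<or> 2 \<le> card ((X - B3) \<inter> B1)
      \<or> (X - B2) \<inter> (X - B3) \<inter> B1 = {}"
    by (rule spread_pair[OF assms(2)])
  have "X - B2 \<noteq> X - B3"
    using member_G[OF B(1)] member_G[OF B(3)] B(5) by blast
  then have "2 * l - 2 \<le> card (deletions B1 (X - B2) \<union> deletions B1 (X - B3))"
    using card_deletions_Un[OF _ _ _ _ complement_meets_B1 complement_meets_B1 spread]
      card_X_Diff_member B finite_X by simp
  moreover have "finite small_blocked_traces"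
  proof (rule finite_subset)
    show "small_blocked_traces \<subseteq> Pow X"
      by (auto simp: small_blocked_traces_def)
  qed (simp add: finite_X)
  moreover have "deletions B1 (X - B2) \<union> deletions B1 (X - B3) \<subseteq> small_blocked_traces"
    using deletions_complement_subset B by auto
  ultimately have "2 * l - 2 \<le> card small_blocked_traces"
    using card_mono le_trans by blast
  then show ?thesis
    using assms(1) by linarith
qed

lemma unshifted_small_blocked_trace:
  assumes "3 \<le> l" "3 \<le> card G"
  obtains S where "S \<in> small_blocked_traces" "S \<notin> shift_trace ` {T. T \<subseteq> B1 \<and> card T = l - 1}"
proof -
  let ?Ts = "{T. T \<subseteq> B1 \<and> card T = l - 1}"
  have fin: "finite ?Ts"
    using finite_member[OF B1_in_G] by simp
  have "card ?Ts = l"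
    using n_subsets[OF finite_member[OF B1_in_G], of "l - 1"] member_G[OF B1_in_G]
      binomial_symmetric[of "l - 1" l] assms(1) by simp
  then have "card (shift_trace ` ?Ts) \<le> l"
    using card_image_le[OF fin, of shift_trace] by simp
  then have "\<not> small_blocked_traces \<subseteq> shift_trace ` ?Ts"
    using card_mono[OF finite_imageI[OF fin], of small_blocked_traces shift_trace]
      card_small_blocked_traces[OF assms] by linarith
  then show ?thesis
    using that by blast
qed

lemma blocked_set_with_small_trace:
  assumes "k = l" "3 \<le> card G"
  obtains A where "A \<in> blocked" "A \<inter> B1 \<noteq> {}" "card (A \<inter> X) = l - 1"
    "A \<notin> shift ` trace_in_B1"
proof -
  have l3: "3 \<le> l"
    using assms(1) three_le_k by simp
  obtain S where "S \<in> small_blocked_traces"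
    and unshifted: "S \<notin> shift_trace ` {T. T \<subseteq> B1 \<and> card T = l - 1}"
    by (rule unshifted_small_blocked_trace[OF l3 assms(2)])
  then obtain B where S: "S \<subseteq> X" "card S = l - 1" "S \<inter> B1 \<noteq> {}" and B: "B \<in> G" "S \<inter> B = {}"
    by (auto simp: small_blocked_traces_def)
  have "1 \<le> card (with_trace S)"
    using card_with_trace[OF S(1)] S(2) assms(1) l3 k_l_less_n by simp
  then have "with_trace S \<noteq> {}"
    by (intro notI) simp
  then obtain A where "A \<in> with_trace S"
    by blast
  then have A: "A \<in> ksets" "A \<inter> X = S"
    by (simp_all add: with_trace_def)
  show ?thesis
  proof (rule that)
    show "A \<in> blocked"
      using A B member_G[OF B(1)] by (auto simp: blocked_def)
    show "A \<inter> B1 \<noteq> {}"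
      using A S member_G[OF B1_in_G] by blast
    show "card (A \<inter> X) = l - 1"
      using A S by simp
    show "A \<notin> shift ` trace_in_B1"
      using trace_of_shifted unshifted A S by fastforce
  qed
qed

lemma card_blocked_ge:
  assumes Y: "Y \<subseteq> blocked - (ksets_avoiding B1 \<union> shift ` trace_in_B1 \<union> extra)"
  shows "card (ksets_avoiding B1) + card trace_in_B1 + card extra + card Y \<le> card blocked"
proof -
  let ?D = "ksets_avoiding B1" and ?S = "shift ` trace_in_B1"
  have fin: "finite blocked"
    using finite_ksets by (simp add: blocked_def)
  have sub: "?D \<subseteq> blocked" "?S \<subseteq> blocked" "extra \<subseteq> blocked"
    using B1_in_G shift_in_blocked extra_in_blocked by (auto simp: ksets_avoiding_def blocked_def)
  have fins: "finite ?D" "finite ?S" "finite extra" "finite Y"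
    using finite_subset[OF sub(1) fin] finite_subset[OF sub(2) fin] finite_subset[OF sub(3) fin]
      finite_subset[OF _ fin, of Y] Y by auto
  have "?D \<inter> ?S = {}"
    using shift_meets_B1 by (auto simp: ksets_avoiding_def)
  then have "card (?D \<union> ?S) = card ?D + card trace_in_B1"
    using card_Un_disjoint[OF fins(1,2)] card_image[OF inj_on_shift] by simp
  moreover have "(?D \<union> ?S) \<inter> extra = {}"
    using extra_meets_B1 extra_not_shifted by (auto simp: ksets_avoiding_def)
  then have "card (?D \<union> ?S \<union> extra) = card (?D \<union> ?S) + card extra"
    using card_Un_disjoint[OF _ fins(3)] fins(1,2) by simp
  moreover have "(?D \<union> ?S \<union> extra) \<inter> Y = {}"
    using Y by blast
  then have "card (?D \<union> ?S \<union> extra \<union> Y) = card (?D \<union> ?S \<union> extra) + card Y"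
    using card_Un_disjoint[OF _ fins(4)] fins(1-3) by simp
  moreover have "card (?D \<union> ?S \<union> extra \<union> Y) \<le> card blocked"
    using sub Y by (intro card_mono[OF fin]) auto
  ultimately show ?thesis
    by simp
qed

lemma card_blocked_lower_bound:
  "((n - l) choose k) + card trace_in_B1 + card G + (if 3 \<le> card G then 1 else 0) \<le> card blocked + 2"
proof (cases "k = l \<and> 3 \<le> card G")
  case True
  then have "k = l" "3 \<le> card G"
    by simp_all
  then obtain A0 where A0: "A0 \<in> blocked" "A0 \<inter> B1 \<noteq> {}" "card (A0 \<inter> X) = l - 1"
    "A0 \<notin> shift ` trace_in_B1"
    by (rule blocked_set_with_small_trace)
  have "A0 \<notin> extra"
    using A0(3) card_trace_extra two_le_l by fastforce
  then have "card (ksets_avoiding B1) + card trace_in_B1 + card extra + card {A0} \<le> card blocked"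
    using A0 by (intro card_blocked_ge) (auto simp: ksets_avoiding_def)
  moreover have "card G - 2 \<le> card extra"
    using card_extra True by simp
  ultimately show ?thesis
    using card_ksets_avoiding_B1 two_le_card_G True by simp
next
  case False
  have "card G - 2 + (if 3 \<le> card G then 1 else 0) \<le> card extra"
  proof (cases "k = l")
    case True
    then show ?thesis
      using False two_le_card_G by simp
  next
    case False
    then have "2 \<le> (n - 2*l) choose (k - l)"
      using binomial_ge_2 l_le_k k_l_less_n by simp
    then have "(card G - 2) * 2 \<le> card extra"
      using card_extra by (meson le_trans mult_le_mono2)
    then show ?thesis
      by (cases "3 \<le> card G") auto
  qed
  then show ?thesis
    using card_blocked_ge[of "{}"] card_ksets_avoiding_B1 two_le_card_G by simp
qed

lemma card_cross_intersecting_bound: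
  assumes "F \<subseteq> ksets" "cross_intersecting F G"
  shows "int (card F) + int (card G) + (if 3 \<le> card G then 1 else 0) \<le> h n k l"
proof -
  have F: "F \<subseteq> ksets - blocked" and blocked: "blocked \<subseteq> ksets"
    using assms by (auto simp: blocked_def cross_intersecting_def)
  have "card F \<le> card (ksets - blocked)"
    using F finite_ksets by (intro card_mono) auto
  also have "\<dots> = (n choose k) - card blocked"
    using card_Diff_subset[OF finite_subset[OF blocked finite_ksets] blocked] card_ksets by simp
  finally have "card F + card blocked \<le> n choose k"
    using card_mono[OF finite_ksets blocked] card_ksets by simp
  moreover have "(n - 2*l) choose k \<le> (n - l) choose k"
    by (rule binomial_right_mono) simp
  then have "card trace_in_B1 + ((n - 2*l) choose k) = (n - l) choose k"
    using card_trace_in_B1 by simp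
  ultimately show ?thesis
    using card_blocked_lower_bound unfolding h_def by (simp split: if_splits)
qed

end

theorem proposition4p3:
  fixes n k l :: nat and F G :: "nat set set"
  assumes "k \<ge> l" "l \<ge> 2" "k \<ge> 3" "n > k + l"
    and "F \<subseteq> {A. A \<subseteq> {1..n} \<and> card A = k}"
    and "G \<subseteq> {B. B \<subseteq> {1..2*l} \<and> card B = l}"
    and "non_trivial F" "non_trivial G"
    and "cross_intersecting F G"
  shows "int (card F) + int (card G) \<le> h n k l \<and>
         (card G \<noteq> 2 \<longrightarrow> int (card F) + int (card G) < h n k l)"
proof -
  obtain B1 where "B1 \<in> G"
    using assms(8) by (auto simp: non_trivial_def)
  then interpret nontrivial_half_family n k l G B1
    using assms by unfold_locales auto
  have "F \<subseteq> ksets"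
    using assms(5) by (simp add: ksets_def U_def)
  then have "int (card F) + int (card G) + (if 3 \<le> card G then 1 else 0) \<le> h n k l"
    using assms(9) by (rule card_cross_intersecting_bound)
  then show ?thesis
    using two_le_card_G by (auto split: if_splits)
qed

end
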